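(* For every $\mathcal{H}\subseteq\{0,1\}^{\mathcal{X}}$: (i) $\operatorname{AL}_{w_1}(\mathcal{H})\ge\operatorname{AL}_{w_2}(\mathcal{H})$ for all $w_1<w_2$; (ii) $\operatorname{AL}_w(\mathcal{H})\ge\min\{w,\operatorname{L}(\mathcal{H})\}$ for all $w\in\mathbb{N}$; (iii) if $\operatorname{L}(\mathcal{H})<\infty$ then $\operatorname{AL}_w(\mathcal{H})=\operatorname{L}(\mathcal{H})$ for all $w\ge\operatorname{L}(\mathcal{H})+1$; (iv) if $\operatorname{L}(\mathcal{H})<\infty$ then $\operatorname{W}(\mathcal{H})\le\operatorname{L}(\mathcal{H})+1$; (v) $\operatorname{W}(\mathcal{H})<\infty$ if and only if $\operatorname{L}(\mathcal{H})<\infty$.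
   Context: AL tree of width $w\in\mathbb{N}=\{1,2,\dots\}$ and depth $d$: a binary string $u$ is an internal node if $|u|<d$ and $u$ has fewer than $w$ ones; the tree assigns $x_u\in\mathcal{X}$ to each internal node. A path is a binary string $\sigma$ whose proper prefixes are all internal nodes but which is not itself one (so $|\sigma|=d$ or $\sigma$ has exactly $w$ ones). The tree is shattered by $\mathcal{H}$ if for every path $\sigma$ some $h\in\mathcal{H}$ satisfies $h(x_{(\sigma_1,\dots,\sigma_{i-1})})=\sigma_i$ for all $i\le|\sigma|$. When $w\ge d$ this is a complete binary (Littlestone) tree of depth $d$. $\operatorname{L}(\mathcal{H})$ (Littlestone dimension) is the largest $d$ such that a complete binary tree of depth $d$ is shattered ($\infty$ if unbounded). $\operatorname{AL}_w(\mathcal{H})$ is the largest $d$ such that an AL tree of width $w$ and depth $d$ is shattered ($\infty$ if unbounded, $0$ if none). The Effective width $\operatorname{W}(\mathcal{H})$ is the smallest $w\in\mathbb{N}$ with $\operatorname{AL}_w(\mathcal{H})<\infty$, and $\infty$ if none exists. *)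

theory Defs
  imports Main "HOL-Library.Extended_Nat"
begin

(* Binary strings are bool lists (True = 1). A tree is a labelling
   T :: bool list => 'x; only its values on internal nodes matter. *)

definition ones :: "bool list \<Rightarrow> nat" where
  "ones u = length (filter id u)"

definition AL_internal :: "nat \<Rightarrow> nat \<Rightarrow> bool list \<Rightarrow> bool" where
  "AL_internal w d u \<longleftrightarrow> length u < d \<and> ones u < w"

definition AL_path :: "nat \<Rightarrow> nat \<Rightarrow> bool list \<Rightarrow> bool" where
  "AL_path w d \<sigma> \<longleftrightarrow> (\<forall>i<length \<sigma>. AL_internal w d (take i \<sigma>)) \<and> \<not> AL_internal w d \<sigma>"

definition AL_shattered :: "('x \<Rightarrow> bool) set \<Rightarrow> nat \<Rightarrow> nat \<Rightarrow> (bool list \<Rightarrow> 'x) \<Rightarrow> bool" where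
  "AL_shattered H w d T \<longleftrightarrow>
     (\<forall>\<sigma>. AL_path w d \<sigma> \<longrightarrow> (\<exists>h\<in>H. \<forall>i<length \<sigma>. h (T (take i \<sigma>)) = \<sigma> ! i))"

definition L_shattered :: "('x \<Rightarrow> bool) set \<Rightarrow> nat \<Rightarrow> (bool list \<Rightarrow> 'x) \<Rightarrow> bool" where
  "L_shattered H d T \<longleftrightarrow>
     (\<forall>\<sigma>. length \<sigma> = d \<longrightarrow> (\<exists>h\<in>H. \<forall>i<d. h (T (take i \<sigma>)) = \<sigma> ! i))"

(* largest d, \<infinity> if unbounded, 0 if none (Sup of empty enat set is 0) *)
definition Ldim :: "('x \<Rightarrow> bool) set \<Rightarrow> enat" where
  "Ldim H = Sup (enat ` {d. \<exists>T. L_shattered H d T})"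

definition ALdim :: "nat \<Rightarrow> ('x \<Rightarrow> bool) set \<Rightarrow> enat" where
  "ALdim w H = Sup (enat ` {d. \<exists>T. AL_shattered H w d T})"

definition Wdim :: "('x \<Rightarrow> bool) set \<Rightarrow> enat" where
  "Wdim H = (if \<exists>w\<ge>1. ALdim w H < \<infinity>
             then enat (LEAST w. w \<ge> 1 \<and> ALdim w H < \<infinity>) else \<infinity>)"

end

theory Submission
  imports Defs
begin

(* Call a string realised if some h in H labels the nodes along it by its bits; this is
   closed under prefixes, and a shattered AL tree realises its paths. Extending a string
   bit by bit until it leaves the internal nodes (at depth d at the latest) makes it a path,
   so a shattered AL tree of width w and depth d realises every string whose proper prefixes
   are internal. All strings of length min w d qualify, so the tree is also a shattered
   complete tree of depth min w d; and every path for a width w1 <= w qualifies. Conversely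
   a shattered complete tree of depth d is a shattered AL tree of every width. *)

definition realised :: "('x \<Rightarrow> bool) set \<Rightarrow> (bool list \<Rightarrow> 'x) \<Rightarrow> bool list \<Rightarrow> bool" where
  "realised H T u \<longleftrightarrow> (\<exists>h\<in>H. \<forall>i<length u. h (T (take i u)) = u ! i)"

lemma realised_take:
  assumes "realised H T u"
  shows "realised H T (take n u)"
proof -
  obtain h where "h \<in> H" and "\<forall>i<length u. h (T (take i u)) = u ! i"
    using assms unfolding realised_def by blast
  then show ?thesis
    unfolding realised_def by (intro bexI[of _ h]) auto
qed

lemma AL_shattered_iff_paths_realised:
  "AL_shattered H w d T \<longleftrightarrow> (\<forall>\<sigma>. AL_path w d \<sigma> \<longrightarrow> realised H T \<sigma>)"
  unfolding AL_shattered_def realised_def ..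

lemma L_shattered_iff_realised:
  "L_shattered H d T \<longleftrightarrow> (\<forall>\<sigma>. length \<sigma> = d \<longrightarrow> realised H T \<sigma>)"
  unfolding L_shattered_def realised_def by auto

lemma AL_internal_mono_width:
  "AL_internal w1 d u \<Longrightarrow> w1 \<le> w2 \<Longrightarrow> AL_internal w2 d u"
  unfolding AL_internal_def by simp

lemma AL_shattered_realised_if_prefixes_internal:
  assumes shattered: "AL_shattered H w d T"
    and prefixes: "\<forall>i<length u. AL_internal w d (take i u)"
  shows "realised H T u"
  using prefixes
proof (induction "d - length u" arbitrary: u rule: less_induct)
  case less
  show ?case
  proof (cases "AL_internal w d u")
    case False
    then have "AL_path w d u"
      using less.prems unfolding AL_path_def by blast
    then show ?thesis
      using shattered unfolding AL_shattered_iff_paths_realised by blast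
  next
    case True
    then have "d - length (u @ [False]) < d - length u"
      unfolding AL_internal_def by (simp add: diff_less_mono2)
    moreover have "\<forall>i<length (u @ [False]). AL_internal w d (take i (u @ [False]))"
      using less.prems True by (auto simp: less_Suc_eq)
    ultimately have "realised H T (u @ [False])"
      using less.hyps by blast
    then show ?thesis
      using realised_take[of H T "u @ [False]" "length u"] by simp
  qed
qed

lemma AL_shattered_imp_L_shattered:
  assumes "AL_shattered H w d T"
  shows "L_shattered H (min w d) T"
  unfolding L_shattered_iff_realised
proof (intro allI impI)
  fix \<sigma> :: "bool list"
  assume len: "length \<sigma> = min w d"
  have "AL_internal w d (take i \<sigma>)" if "i < length \<sigma>" for i
  proof -
    have "ones (take i \<sigma>) \<le> i"
      using length_filter_le[of id "take i \<sigma>"] unfolding ones_def by simp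
    then show ?thesis
      using that len unfolding AL_internal_def by simp
  qed
  then have "\<forall>i<length \<sigma>. AL_internal w d (take i \<sigma>)"
    by blast
  then show "realised H T \<sigma>"
    using AL_shattered_realised_if_prefixes_internal[OF assms] by blast
qed

lemma AL_shattered_antimono_width:
  assumes "AL_shattered H w2 d T" "w1 \<le> w2"
  shows "AL_shattered H w1 d T"
  unfolding AL_shattered_iff_paths_realised
proof (intro allI impI)
  fix \<sigma> assume "AL_path w1 d \<sigma>"
  then have "\<forall>i<length \<sigma>. AL_internal w2 d (take i \<sigma>)"
    using AL_internal_mono_width[OF _ assms(2)] unfolding AL_path_def by blast
  then show "realised H T \<sigma>"
    using AL_shattered_realised_if_prefixes_internal[OF assms(1)] by blast
qed

lemma AL_path_length_le:
  assumes "AL_path w d \<sigma>"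
  shows "length \<sigma> \<le> d"
proof (rule ccontr)
  assume "\<not> length \<sigma> \<le> d"
  moreover from this have "AL_internal w d (take d \<sigma>)"
    using assms unfolding AL_path_def by simp
  ultimately show False
    unfolding AL_internal_def by simp
qed

lemma L_shattered_imp_AL_shattered:
  assumes "L_shattered H d T"
  shows "AL_shattered H w d T"
  unfolding AL_shattered_iff_paths_realised
proof (intro allI impI)
  fix \<sigma> assume "AL_path w d \<sigma>"
  then have "length \<sigma> \<le> d"
    by (rule AL_path_length_le)
  then have "length (\<sigma> @ replicate (d - length \<sigma>) False) = d"
    by simp
  then have "realised H T (take (length \<sigma>) (\<sigma> @ replicate (d - length \<sigma>) False))"
    using assms realised_take unfolding L_shattered_iff_realised by blast
  then show "realised H T \<sigma>"
    by simp
qed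

lemma Ldim_le_ALdim: "Ldim H \<le> ALdim w H"
  unfolding Ldim_def ALdim_def
  by (rule Sup_subset_mono) (use L_shattered_imp_AL_shattered in blast)

lemma ALdim_antimono: "w1 \<le> w2 \<Longrightarrow> ALdim w2 H \<le> ALdim w1 H"
  unfolding ALdim_def
  by (rule Sup_subset_mono) (use AL_shattered_antimono_width in blast)

lemma ALdim_le_Ldim:
  assumes "Ldim H < enat w"
  shows "ALdim w H \<le> Ldim H"
  unfolding ALdim_def
proof (rule Sup_least)
  fix x assume "x \<in> enat ` {d. \<exists>T. AL_shattered H w d T}"
  then obtain d T where x: "x = enat d" and shattered: "AL_shattered H w d T"
    by blast
  from shattered have "L_shattered H (min w d) T"
    by (rule AL_shattered_imp_L_shattered)
  then have "enat (min w d) \<le> Ldim H"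
    unfolding Ldim_def by (intro Sup_upper) blast
  then show "x \<le> Ldim H"
    using assms x by (cases "d \<le> w") auto
qed

lemma ALdim_eq_Ldim: "Ldim H < enat w \<Longrightarrow> ALdim w H = Ldim H"
  using ALdim_le_Ldim Ldim_le_ALdim antisym by blast

lemma Wdim_le:
  assumes "1 \<le> w" "ALdim w H < \<infinity>"
  shows "Wdim H \<le> enat w"
proof -
  have "(LEAST w. 1 \<le> w \<and> ALdim w H < \<infinity>) \<le> w"
    using assms by (intro Least_le) blast
  then show ?thesis
    using assms unfolding Wdim_def by auto
qed

lemma Ldim_finite_if_Wdim_finite:
  assumes "Wdim H < \<infinity>"
  shows "Ldim H < \<infinity>"
proof -
  obtain w where "ALdim w H < \<infinity>"
    using assms unfolding Wdim_def by (auto split: if_splits)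
  then show ?thesis
    using Ldim_le_ALdim le_less_trans by blast
qed

theorem lemma1:
  fixes H :: "('x \<Rightarrow> bool) set"
  shows "(\<forall>w1 w2. 1 \<le> w1 \<and> w1 < w2 \<longrightarrow> ALdim w2 H \<le> ALdim w1 H)
    \<and> (\<forall>w. 1 \<le> w \<longrightarrow> min (enat w) (Ldim H) \<le> ALdim w H)
    \<and> (Ldim H < \<infinity> \<longrightarrow> (\<forall>w. 1 \<le> w \<and> Ldim H + 1 \<le> enat w \<longrightarrow> ALdim w H = Ldim H))
    \<and> (Ldim H < \<infinity> \<longrightarrow> Wdim H \<le> Ldim H + 1)
    \<and> (Wdim H < \<infinity> \<longleftrightarrow> Ldim H < \<infinity>)"
proof -
  have eq: "ALdim w H = Ldim H" if "Ldim H < \<infinity>" "Ldim H + 1 \<le> enat w" for w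
    using that by (intro ALdim_eq_Ldim) (cases "Ldim H"; simp add: one_enat_def)
  have Wdim_bound: "Wdim H \<le> Ldim H + 1" if finite: "Ldim H < \<infinity>"
  proof -
    obtain n where n: "Ldim H = enat n"
      using finite by (cases "Ldim H") auto
    then have "ALdim (n + 1) H < \<infinity>"
      using eq[of "n + 1"] by (simp add: one_enat_def)
    then show ?thesis
      using Wdim_le[of "n + 1" H] n by (simp add: one_enat_def)
  qed
  have "Wdim H < \<infinity>" if "Ldim H < \<infinity>"
    using Wdim_bound[OF that] that by (cases "Ldim H"; cases "Wdim H") (auto simp: one_enat_def)
  moreover have "\<forall>w1 w2. 1 \<le> w1 \<and> w1 < w2 \<longrightarrow> ALdim w2 H \<le> ALdim w1 H"
    using ALdim_antimono less_imp_le by blast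
  moreover have "\<forall>w. 1 \<le> w \<longrightarrow> min (enat w) (Ldim H) \<le> ALdim w H"
    using Ldim_le_ALdim min.coboundedI2 by blast
  ultimately show ?thesis
    using eq Wdim_bound Ldim_finite_if_Wdim_finite by blast
qed

end
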